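(* For every Molholes term $t$ and every list of resources $l=[l_0,\dots,l_{|l|-1}]$ (with types making the terms well-typed), \[\mathsf{First}\,(\mathit{seq}^{G}_{l}(l,t))\equiv\mathit{seq}^{G}_{l}(l,\mathit{perm}_l(|l|,\mathsf{First}\,t)),\qquad \mathsf{First}\,(\mathit{seq}^{S}_{r}(l,t))\equiv\mathit{seq}^{S}_{r}(l,\mathit{perm}_r(|l|,\mathsf{First}\,t)).\]
   Context: Host types are sets with products; $\mathit{perm}=\lambda((x,y),z).((x,z),y)$. Molholes terms: $\mathsf{Arr}\,f:\mathsf{RSF}\,A\,B$, $\mathsf{Comp}\,t_1\,t_2$ (written $t_1\ggg t_2$, left-associative unless parenthesised), $\mathsf{First}\,t:\mathsf{RSF}(A\times C)(B\times C)$, $\mathsf{Get}\,r:\mathsf{RSF}\,A(A\times B)$, $\mathsf{Set}\,r:\mathsf{RSF}(A\times B)A$ ($r=\mathsf{Ref}\,B\,n$ a resource). Notations: $\mathit{stack}(n,t)=\mathsf{First}(\cdots(\mathsf{First}\,t)\cdots)$ with $n$ applications of $\mathsf{First}$; $\mathit{perm}_l(n,t)=\mathit{stack}(n-1,\mathsf{Arr}\,\mathit{perm})\ggg\cdots\ggg\mathit{stack}(0,\mathsf{Arr}\,\mathit{perm})\ggg t$; $\mathit{perm}_r(n,t)=t\ggg\mathit{stack}(0,\mathsf{Arr}\,\mathit{perm})\ggg\cdots\ggg\mathit{stack}(n-1,\mathsf{Arr}\,\mathit{perm})$; $\mathit{seq}^G_l(l,t)=\mathsf{Get}\,l_0\ggg(\cdots\ggg(\mathsf{Get}\,l_{|l|-1}\ggg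 t)\cdots)$; $\mathit{seq}^S_r(l,t)=t\ggg\mathsf{Set}\,l_{|l|-1}\ggg\cdots\ggg\mathsf{Set}\,l_0$. Semantics: a memory is a partial map from $\mathbb N$ to cells $\mathsf{Cell}(s,\tau)\,x$ ($s\in\{\mathsf{Internal},\mathsf{Input}\,b,\mathsf{Output}\,b\}$, $x$ a value of $\tau$ or $\mathsf{undef}$). For $r=\mathsf{Ref}\,A\,n$: $\mathrm{read}\,r\,\sigma=(x,\sigma)$ if $\sigma n=\mathsf{Cell}(\mathsf{Internal},A)x$; $=(x,\sigma[n\mapsto\mathsf{Cell}(\mathsf{Input}\,\mathrm{false},A)\mathsf{undef}])$ if $\sigma n=\mathsf{Cell}(\mathsf{Input}\,\mathrm{true},A)x$; else undefined. $\mathrm{write}\,r\,\sigma\,v=\sigma[n\mapsto\mathsf{Cell}(\mathsf{Internal},A)v]$ if $\sigma n=\mathsf{Cell}(\mathsf{Internal},A)x$; $=\sigma[n\mapsto\mathsf{Cell}(\mathsf{Output}\,\mathrm{false},A)v]$ if $\sigma n=\mathsf{Cell}(\mathsf{Output}\,\mathrm{true},A)\mathsf{undef}$; else undefined. $\mathrm{step}\,t:A\to(\text{memory}\rightharpoonup B\times\text{memory})$: $\mathsf{Arr}\,f\mapsto\lambda x\sigma.(fx,\sigma)$; $\mathsf{Comp}\,t_1t_2\mapsto\lambda x\sigma.\mathrm{step}\,t_2\,y\,\sigma'$ with $(y,\sigma')=\mathrm{step}\,t_1\,x\,\sigma$; $\mathsf{First}\,t\mapsto\lambda(x,c)\sigma.((y,c),\sigma')$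 with $(y,\sigma')=\mathrm{step}\,t\,x\,\sigma$; $\mathsf{Get}\,r\mapsto\lambda x\sigma.((x,y),\sigma')$ with $(y,\sigma')=\mathrm{read}\,r\,\sigma$; $\mathsf{Set}\,r\mapsto\lambda(x,y)\sigma.(x,\mathrm{write}\,r\,\sigma\,y)$ (all partial). $t\equiv t'$ iff $\mathrm{step}\,t=\mathrm{step}\,t'$ as partial functions. *)

theory Defs
  imports Main
begin

datatype 'b val = Atom 'b | VPair "'b val" "'b val"

datatype 'b ty = TBase "'b set" | TProd "'b ty" "'b ty"

fun has_ty :: "'b val \<Rightarrow> 'b ty \<Rightarrow> bool" where
  "has_ty (Atom a) (TBase S) = (a \<in> S)"
| "has_ty (VPair x y) (TProd A B) = (has_ty x A \<and> has_ty y B)"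
| "has_ty _ _ = False"

datatype 'b resource = Ref "'b ty" nat

datatype status = Internal | Input bool | Output bool

text \<open>A cell: status, type, and contents (None = undef).\<close>
datatype 'b cell = Cell status "'b ty" "'b val option"

type_synonym 'b memory = "nat \<Rightarrow> 'b cell option"

definition wf_mem :: "'b memory \<Rightarrow> bool" where
  "wf_mem \<sigma> \<longleftrightarrow> (\<forall>n s \<tau> x. \<sigma> n = Some (Cell s \<tau> (Some x)) \<longrightarrow> has_ty x \<tau>)"

datatype 'b rsf =
    Arr "'b val \<Rightarrow> 'b val"
  | Comp "'b rsf" "'b rsf"
  | First "'b rsf"
  | Get "'b resource"
  | Set "'b resource"

inductive wt :: "'b rsf \<Rightarrow> 'b ty \<Rightarrow> 'b ty \<Rightarrow> bool" where
  wt_Arr: "(\<And>v. has_ty v A \<Longrightarrow> has_ty (f v) B) \<Longrightarrow> wt (Arr f) A B"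
| wt_Comp: "wt t1 A B \<Longrightarrow> wt t2 B C \<Longrightarrow> wt (Comp t1 t2) A C"
| wt_First: "wt t A B \<Longrightarrow> wt (First t) (TProd A C) (TProd B C)"
| wt_Get: "wt (Get (Ref B n)) A (TProd A B)"
| wt_Set: "wt (Set (Ref B n)) (TProd A B) A"

fun perm :: "'b val \<Rightarrow> 'b val" where
  "perm (VPair (VPair x y) z) = VPair (VPair x z) y"
| "perm v = v"  (* irrelevant on well-typed inputs *)

fun read_mem :: "'b resource \<Rightarrow> 'b memory \<Rightarrow> ('b val \<times> 'b memory) option" where
  "read_mem (Ref A n) \<sigma> =
     (case \<sigma> n of
        Some (Cell Internal A' (Some x)) \<Rightarrow> if A' = A then Some (x, \<sigma>) else None
      | Some (Cell (Input True) A' (Some x)) \<Rightarrow>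
          if A' = A then Some (x, \<sigma>(n \<mapsto> Cell (Input False) A None)) else None
      | _ \<Rightarrow> None)"

fun write_mem :: "'b resource \<Rightarrow> 'b memory \<Rightarrow> 'b val \<Rightarrow> 'b memory option" where
  "write_mem (Ref A n) \<sigma> v =
     (case \<sigma> n of
        Some (Cell Internal A' _) \<Rightarrow> if A' = A then Some (\<sigma>(n \<mapsto> Cell Internal A (Some v))) else None
      | Some (Cell (Output True) A' None) \<Rightarrow>
          if A' = A then Some (\<sigma>(n \<mapsto> Cell (Output False) A (Some v))) else None
      | _ \<Rightarrow> None)"

fun step :: "'b rsf \<Rightarrow> 'b val \<Rightarrow> 'b memory \<Rightarrow> ('b val \<times> 'b memory) option" where
  "step (Arr f) x \<sigma> = Some (f x, \<sigma>)"
| "step (Comp t1 t2) x \<sigma> =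
     (case step t1 x \<sigma> of None \<Rightarrow> None | Some (y, \<sigma>') \<Rightarrow> step t2 y \<sigma>')"
| "step (First t) xc \<sigma> =
     (case xc of
        VPair x c \<Rightarrow> (case step t x \<sigma> of None \<Rightarrow> None | Some (y, \<sigma>') \<Rightarrow> Some (VPair y c, \<sigma>'))
      | _ \<Rightarrow> None)"
| "step (Get r) x \<sigma> =
     (case read_mem r \<sigma> of None \<Rightarrow> None | Some (y, \<sigma>') \<Rightarrow> Some (VPair x y, \<sigma>'))"
| "step (Set r) xy \<sigma> =
     (case xy of
        VPair x y \<Rightarrow> (case write_mem r \<sigma> y of None \<Rightarrow> None | Some \<sigma>' \<Rightarrow> Some (x, \<sigma>'))
      | _ \<Rightarrow> None)"

definition equiv_rsf :: "'b ty \<Rightarrow> 'b rsf \<Rightarrow> 'b rsf \<Rightarrow> bool" where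
  "equiv_rsf A t t' \<longleftrightarrow> (\<forall>x \<sigma>. has_ty x A \<longrightarrow> wf_mem \<sigma> \<longrightarrow> step t x \<sigma> = step t' x \<sigma>)"

definition stack :: "nat \<Rightarrow> 'b rsf \<Rightarrow> 'b rsf" where
  "stack n t = (First ^^ n) t"

text \<open>perm_l(n,t) = stack(n-1,Arr perm) >>> ... >>> stack(0,Arr perm) >>> t (left-assoc)\<close>
definition perm_l :: "nat \<Rightarrow> 'b rsf \<Rightarrow> 'b rsf" where
  "perm_l n t = (case n of 0 \<Rightarrow> t
     | Suc m \<Rightarrow> foldl Comp (stack m (Arr perm))
                  (map (\<lambda>i. stack i (Arr perm)) (rev [0..<m]) @ [t]))"

definition perm_r :: "nat \<Rightarrow> 'b rsf \<Rightarrow> 'b rsf" where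
  "perm_r n t = foldl Comp t (map (\<lambda>i. stack i (Arr perm)) [0..<n])"

fun seqG :: "'b resource list \<Rightarrow> 'b rsf \<Rightarrow> 'b rsf" where
  "seqG [] t = t"
| "seqG (r # rs) t = Comp (Get r) (seqG rs t)"

text \<open>seqS(l,t) = t >>> Set l_{n-1} >>> ... >>> Set l0 (left-assoc)\<close>
definition seqS :: "'b resource list \<Rightarrow> 'b rsf \<Rightarrow> 'b rsf" where
  "seqS l t = foldl (\<lambda>acc r. Comp acc (Set r)) t (rev l)"

end

theory Submission
  imports Defs
begin

text \<open>Reading the resources of \<open>l\<close> turns an input \<open>(x, c)\<close> into the left-nested tuple
  \<open>(((x, c), y\<^sub>1), \<dots>, y\<^sub>n)\<close>; the \<open>n\<close> permutations of \<open>perm_l\<close> bubble \<open>c\<close> outwards one level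
  at a time, so that \<open>First t\<close> receives \<open>((((x, y\<^sub>1), \<dots>, y\<^sub>n), c)\<close>, exactly what \<open>First\<close> of the
  reading term hands to \<open>t\<close>. Dually, \<open>perm_r\<close> pushes \<open>c\<close> back below the \<open>n\<close> outermost
  components of the output of \<open>t\<close>, which the \<open>Set\<close> instructions then write to memory
  regardless of what sits underneath. This second half needs typing: only by subject
  reduction is the output of \<open>t\<close> known to be an \<open>n\<close>-fold nested pair; on other values
  \<open>perm\<close> is the identity and the two sides differ.\<close>

lemma step_foldl_Comp_Comp:
  "step (foldl Comp (Comp u v) ts) x \<sigma> = step (Comp u (foldl Comp v ts)) x \<sigma>"
proof (induction ts arbitrary: u v x \<sigma>)
  case Nil
  show ?case by simp
next
  case (Cons w ts)
  then show ?case by (simp split: option.splits)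
qed

lemma step_foldl_Comp_None:
  "step u x \<sigma> = None \<Longrightarrow> step (foldl Comp u ts) x \<sigma> = None"
  by (induction ts arbitrary: u) auto

lemma stack_Suc: "stack (Suc n) t = First (stack n t)"
  by (simp add: stack_def)

lemma step_stack_Arr:
  "length ws = n \<Longrightarrow>
   step (stack n (Arr f)) (foldl VPair a ws) \<sigma> = Some (foldl VPair (f a) ws, \<sigma>)"
proof (induction ws arbitrary: n rule: rev_induct)
  case Nil
  then show ?case by (simp add: stack_def)
next
  case (snoc w ws)
  then show ?case by (auto simp: stack_Suc)
qed

lemma step_perm_l_Suc:
  "step (perm_l (Suc n) t) x \<sigma> = step (Comp (stack n (Arr perm)) (perm_l n t)) x \<sigma>"
proof (cases n)
  case 0
  then show ?thesis by (simp add: perm_l_def)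
next
  case (Suc k)
  then show ?thesis
    by (simp add: perm_l_def step_foldl_Comp_Comp split: option.splits)
qed

lemma step_perm_l:
  "length ys = n \<Longrightarrow>
   step (perm_l n t) (foldl VPair (VPair x c) ys) \<sigma> = step t (VPair (foldl VPair x ys) c) \<sigma>"
proof (induction ys arbitrary: n x)
  case Nil
  then show ?case by (simp add: perm_l_def)
next
  case (Cons y ys)
  have "step (stack (length ys) (Arr perm)) (foldl VPair (VPair (VPair x c) y) ys) \<sigma>
      = Some (foldl VPair (VPair (VPair x y) c) ys, \<sigma>)"
    by (simp add: step_stack_Arr)
  with Cons.prems show ?case by (auto simp: step_perm_l_Suc Cons.IH)
qed

lemma perm_r_Suc: "perm_r (Suc n) u = Comp (perm_r n u) (stack n (Arr perm))"
  by (simp add: perm_r_def)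

lemma step_perm_r:
  assumes "length ws2 = n" and "step u x \<sigma> = Some (VPair (foldl VPair z (ws1 @ ws2)) c, \<sigma>')"
  shows "step (perm_r n u) x \<sigma> = Some (foldl VPair (VPair (foldl VPair z ws1) c) ws2, \<sigma>')"
  using assms
proof (induction n arbitrary: ws1 ws2)
  case 0
  then show ?case by (simp add: perm_r_def)
next
  case (Suc n)
  then obtain w ws2' where ws2: "ws2 = w # ws2'" "length ws2' = n"
    by (cases ws2) auto
  with Suc.prems have "step u x \<sigma> = Some (VPair (foldl VPair z ((ws1 @ [w]) @ ws2')) c, \<sigma>')"
    by simp
  with ws2(2) have
    "step (perm_r n u) x \<sigma> = Some (foldl VPair (VPair (foldl VPair z (ws1 @ [w])) c) ws2', \<sigma>')"
    by (rule Suc.IH)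
  with ws2 show ?case by (simp add: perm_r_Suc step_stack_Arr)
qed

fun read_list :: "'b resource list \<Rightarrow> 'b memory \<Rightarrow> ('b val list \<times> 'b memory) option" where
  "read_list [] \<sigma> = Some ([], \<sigma>)"
| "read_list (r # rs) \<sigma> =
     (case read_mem r \<sigma> of
        None \<Rightarrow> None
      | Some (y, \<sigma>') \<Rightarrow> map_option (\<lambda>(ys, \<sigma>''). (y # ys, \<sigma>'')) (read_list rs \<sigma>'))"

lemma length_read_list: "read_list rs \<sigma> = Some (ys, \<sigma>') \<Longrightarrow> length ys = length rs"
  by (induction rs arbitrary: \<sigma> ys) (auto split: option.splits)

lemma step_seqG:
  "step (seqG rs u) x \<sigma> =
   (case read_list rs \<sigma> of None \<Rightarrow> None | Some (ys, \<sigma>') \<Rightarrow> step u (foldl VPair x ys) \<sigma>')"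
  by (induction rs arbitrary: x \<sigma>) (auto split: option.splits)

fun write_list :: "'b resource list \<Rightarrow> 'b val list \<Rightarrow> 'b memory \<Rightarrow> 'b memory option" where
  "write_list (r # rs) (w # ws) \<sigma> = Option.bind (write_list rs ws \<sigma>) (\<lambda>\<sigma>'. write_mem r \<sigma>' w)"
| "write_list _ _ \<sigma> = Some \<sigma>"

lemma seqS_Cons: "seqS (r # rs) u = Comp (seqS rs u) (Set r)"
  by (simp add: seqS_def)

lemma step_seqS:
  assumes "length ws = length rs" and "step u x \<sigma> = Some (foldl VPair z ws, \<sigma>')"
  shows "step (seqS rs u) x \<sigma> = map_option (Pair z) (write_list rs ws \<sigma>')"
  using assms
proof (induction rs arbitrary: ws z)
  case Nil
  then show ?case by (simp add: seqS_def)
next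
  case (Cons r rs)
  then obtain w ws' where ws: "ws = w # ws'" "length ws' = length rs"
    by (cases ws) auto
  with Cons have "step (seqS rs u) x \<sigma> = map_option (Pair (VPair z w)) (write_list rs ws' \<sigma>')"
    by simp
  with ws show ?case by (auto simp: seqS_Cons split: option.splits)
qed

lemma step_seqS_None: "step u x \<sigma> = None \<Longrightarrow> step (seqS rs u) x \<sigma> = None"
  by (induction rs) (auto simp: seqS_Cons seqS_def)

lemma step_First_seqG:
  "step (First (seqG rs t)) (VPair x c) \<sigma> =
   step (seqG rs (perm_l (length rs) (First t))) (VPair x c) \<sigma>"
  by (auto simp: step_seqG step_perm_l dest: length_read_list split: option.splits)

lemma read_mem_wf:
  assumes "read_mem (Ref B n) \<sigma> = Some (y, \<sigma>')" and "wf_mem \<sigma>"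
  shows "has_ty y B \<and> wf_mem \<sigma>'"
  using assms
  by (auto simp: wf_mem_def split: option.splits cell.splits status.splits bool.splits if_splits)

lemma write_mem_wf:
  assumes "write_mem (Ref B n) \<sigma> y = Some \<sigma>'" and "wf_mem \<sigma>" and "has_ty y B"
  shows "wf_mem \<sigma>'"
  using assms
  by (auto simp: wf_mem_def split: option.splits cell.splits status.splits bool.splits if_splits)

lemma has_ty_TProd: "has_ty v (TProd A B) \<longleftrightarrow> (\<exists>a b. v = VPair a b \<and> has_ty a A \<and> has_ty b B)"
  by (cases v) auto

lemma step_preserves_types:
  assumes "wt t A B" and "has_ty x A" and "wf_mem \<sigma>" and "step t x \<sigma> = Some (y, \<sigma>')"
  shows "has_ty y B \<and> wf_mem \<sigma>'"
  using assms
proof (induction t A B arbitrary: x y \<sigma> \<sigma>' rule: wt.induct)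
  case (wt_Arr A f B)
  from wt_Arr.prems(3) have "y = f x" and "\<sigma>' = \<sigma>"
    by simp_all
  with wt_Arr.hyps[OF wt_Arr.prems(1)] wt_Arr.prems(2) show ?case
    by simp
next
  case (wt_Comp t1 A B t2 C)
  from wt_Comp.prems(3) obtain m \<sigma>m
    where m: "step t1 x \<sigma> = Some (m, \<sigma>m)" and y: "step t2 m \<sigma>m = Some (y, \<sigma>')"
    by (auto split: option.splits)
  from wt_Comp.IH(1)[OF wt_Comp.prems(1,2) m] have "has_ty m B" and "wf_mem \<sigma>m"
    by simp_all
  from wt_Comp.IH(2)[OF this y] show ?case .
next
  case (wt_First t A B C)
  from wt_First.prems(1) obtain a c where x: "x = VPair a c" "has_ty a A" "has_ty c C"
    by (auto simp: has_ty_TProd)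
  with wt_First.prems(3) obtain b where b: "step t a \<sigma> = Some (b, \<sigma>')" and "y = VPair b c"
    by (auto split: option.splits)
  with wt_First.IH[OF x(2) wt_First.prems(2) b] x(3) show ?case
    by simp
next
  case (wt_Get B n A)
  from wt_Get.prems(3) obtain z
    where z: "read_mem (Ref B n) \<sigma> = Some (z, \<sigma>')" and "y = VPair x z"
    by (auto simp del: read_mem.simps split: option.splits)
  with read_mem_wf[OF z wt_Get.prems(2)] wt_Get.prems(1) show ?case
    by simp
next
  case (wt_Set B n A)
  from wt_Set.prems(1) obtain a b where x: "x = VPair a b" "has_ty a A" "has_ty b B"
    by (auto simp: has_ty_TProd)
  with wt_Set.prems(3) have "write_mem (Ref B n) \<sigma> b = Some \<sigma>'" and "y = a"
    by (auto simp del: write_mem.simps split: option.splits)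
  with write_mem_wf wt_Set.prems(2) x(2,3) show ?case
    by blast
qed

inductive_cases wt_CompE: "wt (Comp t1 t2) A B"
inductive_cases wt_SetE: "wt (Set r) A B"

lemma wt_seqS_nested:
  "wt (seqS rs t) A B \<Longrightarrow> \<exists>Ts. length Ts = length rs \<and> wt t A (foldl TProd B Ts)"
proof (induction rs arbitrary: B)
  case Nil
  then show ?case by (simp add: seqS_def)
next
  case (Cons r rs)
  then obtain M where "wt (seqS rs t) A M" and "wt (Set r) M B"
    unfolding seqS_Cons by (auto elim: wt_CompE)
  moreover from this(2) obtain B' where "M = TProd B B'"
    by (auto elim: wt_SetE)
  ultimately obtain Ts where "length Ts = length rs" and "wt t A (foldl TProd (TProd B B') Ts)"
    using Cons.IH by blast
  then show ?case
    by (intro exI[of _ "B' # Ts"]) simp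
qed

lemma has_ty_foldl_TProd:
  "has_ty v (foldl TProd B Ts) \<Longrightarrow> \<exists>z ws. v = foldl VPair z ws \<and> length ws = length Ts"
proof (induction Ts arbitrary: v rule: rev_induct)
  case Nil
  then show ?case
    by (intro exI[of _ v] exI[of _ "[]"]) simp
next
  case (snoc T Ts)
  then obtain v' w where v: "v = VPair v' w" and "has_ty v' (foldl TProd B Ts)"
    by (auto simp: has_ty_TProd)
  with snoc.IH obtain z ws where "v' = foldl VPair z ws" and "length ws = length Ts"
    by blast
  with v show ?case
    by (intro exI[of _ z] exI[of _ "ws @ [w]"]) simp
qed

lemma step_First_seqS:
  assumes "wt (seqS rs t) A B" and "has_ty a A" and "wf_mem \<sigma>"
  shows "step (First (seqS rs t)) (VPair a c) \<sigma> =
         step (seqS rs (perm_r (length rs) (First t))) (VPair a c) \<sigma>"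
proof (cases "step t a \<sigma>")
  case None
  then show ?thesis
    by (simp add: step_seqS_None perm_r_def step_foldl_Comp_None)
next
  case (Some p)
  then obtain T \<sigma>' where T: "step t a \<sigma> = Some (T, \<sigma>')"
    by (cases p) auto
  from wt_seqS_nested[OF assms(1)] obtain Ts
    where "length Ts = length rs" and "wt t A (foldl TProd B Ts)"
    by blast
  with step_preserves_types[OF _ assms(2,3) T] obtain z ws
    where T_nested: "T = foldl VPair z ws" and len: "length ws = length rs"
    by (metis has_ty_foldl_TProd)
  from T have "step (First t) (VPair a c) \<sigma> = Some (VPair (foldl VPair z ([] @ ws)) c, \<sigma>')"
    by (simp add: T_nested)
  from step_perm_r[OF len this]
  have "step (seqS rs (perm_r (length rs) (First t))) (VPair a c) \<sigma>
      = map_option (Pair (VPair z c)) (write_list rs ws \<sigma>')"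
    by (simp add: step_seqS len)
  moreover from T have "step (seqS rs t) a \<sigma> = map_option (Pair z) (write_list rs ws \<sigma>')"
    by (simp add: step_seqS len T_nested)
  ultimately show ?thesis
    by (auto split: option.splits)
qed

theorem lemma8:
  fixes t :: "'b rsf" and l :: "'b resource list" and A B C :: "'b ty"
  shows "(wt (seqG l t) A B \<longrightarrow>
            equiv_rsf (TProd A C) (First (seqG l t)) (seqG l (perm_l (length l) (First t))))
       \<and> (wt (seqS l t) A B \<longrightarrow>
            equiv_rsf (TProd A C) (First (seqS l t)) (seqS l (perm_r (length l) (First t))))"
proof (intro conjI impI)
  show "equiv_rsf (TProd A C) (First (seqG l t)) (seqG l (perm_l (length l) (First t)))"
    unfolding equiv_rsf_def has_ty_TProd using step_First_seqG by blast
next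
  assume "wt (seqS l t) A B"
  then show "equiv_rsf (TProd A C) (First (seqS l t)) (seqS l (perm_r (length l) (First t)))"
    unfolding equiv_rsf_def has_ty_TProd using step_First_seqS by blast
qed

end
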